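(* Let $m,n,d,n_0$ be positive integers, $R>0$, $\mathbb{S}^d:=[-R,R]^d$, $x\in\mathbb{R}^{m\times n}$, and let $G:\mathbb{R}^d\to\mathbb{R}^{m\times n}$ be continuous. Assume there exists $z^*\in\mathbb{S}^d$ with $\|x-G(z^* )\|_0\le n_0$. Consider the constrained problem $$(\mathrm{P}_0):\quad \min_{z\in\mathbb{S}^d,\ M\in\mathbb{R}^{m\times n}} \|(\mathbf{1}-M)\odot x-(\mathbf{1}-M)\odot G(z)\|_2^2 \quad\text{s.t. } \|M\|_0\le n_0,$$ and, for $\lambda>0$, the penalized problem $$(\mathrm{P}_\lambda):\quad \min_{z\in\mathbb{S}^d,\ M\in\mathbb{R}^{m\times n}} \|(\mathbf{1}-M)\odot x-(\mathbf{1}-M)\odot G(z)\|_2^2+\lambda\|M\|_1 .$$ Let $\hat z(\lambda)$ be any optimal $z$-component of a solution of $(\mathrm{P}_\lambda)$, and let $\mathcal{Z}^*$ be the set of $z$-components of optimal solutions of $(\mathrm{P}_0)$. Then $d_\infty(\hat z(\lambda),\mathcal{Z}^* )\downarrow 0$ as $\lambda\downarrow 0$. Moreover, letting $\tilde n=\min_{z\in\mathbb{S}^d}\|x-G(z)\|_0$ and $\tilde{\mathcal{Z}}=\{z\in\mathbb{S}^d : \|x-G(z)\|_0=\tilde n\}$, we have $d_\infty(\hat z(\lambda),\tilde{\mathcal{Z}})\downarrow 0$ as $\lambda\downarrow 0$. If in addition $\tilde{\mathcal{Z}}=\{z^*\}$ (i.e. $z^*$ is the unique minimizer of $\|x-G(z)\|_0$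 over $\mathbb{S}^d$), then $\hat z(\lambda)\to z^*$ as $\lambda\downarrow 0$.
   Context: For a matrix $T$, $\|T\|_0$ is the number of nonzero entries, and $\|T\|_1,\|T\|_2,\|T\|_\infty$ are computed by treating $T$ as a vector. $\mathbf{1}$ is the all-ones $m\times n$ matrix and $\odot$ is the entrywise (Hadamard) product. For a point $a$ and a set $B$, $d_\infty(a,B):=\inf_{b\in B}\|a-b\|_\infty$. *)

theory Defs
  imports "HOL-Analysis.Analysis"
begin

text \<open>Matrices in R^(m x n) are represented as real^'n^'m (entry T$i$j).
  Vectors in R^d are real^'d.\<close>

definition mat_l0 :: "real^'n^'m \<Rightarrow> nat" where
  "mat_l0 T = card {(i,j). T$i$j \<noteq> 0}"

definition mat_l1 :: "real^'n^'m \<Rightarrow> real" where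
  "mat_l1 T = (\<Sum>i\<in>UNIV. \<Sum>j\<in>UNIV. \<bar>T$i$j\<bar>)"

definition mat_l2sq :: "real^'n^'m \<Rightarrow> real" where
  "mat_l2sq T = (\<Sum>i\<in>UNIV. \<Sum>j\<in>UNIV. (T$i$j)^2)"

definition hadamard :: "real^'n^'m \<Rightarrow> real^'n^'m \<Rightarrow> real^'n^'m" where
  "hadamard A B = (\<chi> i j. A$i$j * B$i$j)"

definition ones_mat :: "real^'n^'m" where
  "ones_mat = (\<chi> i j. 1)"

definition vec_linf :: "real^'d \<Rightarrow> real" where
  "vec_linf a = Max (range (\<lambda>i. \<bar>a$i\<bar>))"

definition d_inf :: "real^'d \<Rightarrow> (real^'d) set \<Rightarrow> real" where
  "d_inf a B = Inf ((\<lambda>b. vec_linf (a - b)) ` B)"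

definition box_set :: "real \<Rightarrow> (real^'d) set" where
  "box_set R = {z. \<forall>i. \<bar>z$i\<bar> \<le> R}"

definition fit :: "real^'n^'m \<Rightarrow> ((real^'d) \<Rightarrow> real^'n^'m) \<Rightarrow> real^'d \<Rightarrow> real^'n^'m \<Rightarrow> real" where
  "fit x G z M = mat_l2sq (hadamard (ones_mat - M) x - hadamard (ones_mat - M) (G z))"

definition opt_P0 :: "real \<Rightarrow> nat \<Rightarrow> real^'n^'m \<Rightarrow> ((real^'d) \<Rightarrow> real^'n^'m) \<Rightarrow> real^'d \<Rightarrow> real^'n^'m \<Rightarrow> bool" where
  "opt_P0 R n0 x G z M \<longleftrightarrow> z \<in> box_set R \<and> mat_l0 M \<le> n0 \<and>
     (\<forall>z'\<in>box_set R. \<forall>M'. mat_l0 M' \<le> n0 \<longrightarrow> fit x G z M \<le> fit x G z' M')"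

definition opt_Plam :: "real \<Rightarrow> real \<Rightarrow> real^'n^'m \<Rightarrow> ((real^'d) \<Rightarrow> real^'n^'m) \<Rightarrow> real^'d \<Rightarrow> real^'n^'m \<Rightarrow> bool" where
  "opt_Plam R lam x G z M \<longleftrightarrow> z \<in> box_set R \<and>
     (\<forall>z'\<in>box_set R. \<forall>M'. fit x G z M + lam * mat_l1 M \<le> fit x G z' M' + lam * mat_l1 M')"

end

theory Submission
  imports Defs
begin

(* Let Z' be the set of minimisers of ||x - G z||_0 over the box and n' the minimal value.
   Masking exactly the support of x - G z for z in Z' gives zero fit with ||M||_0 = n' <= n0, so
   Z' consists of solutions of (P_0), and it shows that the optimal value of (P_lambda) is at
   most lambda n'.  Conversely, if ||x - G z0||_0 > n', the squared residuals on that support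
   stay above some c > 0 near z0, and whatever M is, each of these more than n' entries costs
   at least lambda - lambda^2/(4c) in (P_lambda); for small lambda this exceeds lambda n'.
   Hence all limit points of zhat lambda as lambda -> 0+ lie in Z', and compactness of the box
   gives convergence of the distance to Z'. *)

lemma tendsto_infdist_at_right_0_compact:
  fixes g :: "real \<Rightarrow> 'a::metric_space"
  assumes K: "compact K" and g_in: "\<And>t. 0 < t \<Longrightarrow> g t \<in> K"
    and limits: "\<And>s z. (\<And>k. 0 < s k) \<Longrightarrow> s \<longlonglongrightarrow> 0 \<Longrightarrow> z \<in> K \<Longrightarrow>
      (\<lambda>k. g (s k)) \<longlonglongrightarrow> z \<Longrightarrow> z \<in> Z"
  shows "((\<lambda>t. infdist (g t) Z) \<longlongrightarrow> 0) (at_right 0)"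
proof (rule tendsto_at_right_sequentially[of 0 1])
  fix s :: "nat \<Rightarrow> real"
  assume s_pos: "\<And>n. 0 < s n" and s_lim: "s \<longlonglongrightarrow> 0"
  show "(\<lambda>n. infdist (g (s n)) Z) \<longlonglongrightarrow> 0"
  proof (rule tendstoI, rule ccontr)
    fix e :: real
    assume "0 < e"
      and not_close: "\<not> (\<forall>\<^sub>F n in sequentially. dist (infdist (g (s n)) Z) 0 < e)"
    then obtain r :: "nat \<Rightarrow> nat" where r: "strict_mono r"
      and "\<forall>n. \<not> dist (infdist (g (s (r n))) Z) 0 < e"
      using not_eventually_sequentiallyD[OF not_close] by blast
    then have far: "e \<le> infdist (g (s (r n))) Z" for n
      by (simp add: dist_real_def infdist_nonneg not_less)
    have "\<forall>n. g (s (r n)) \<in> K"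
      using g_in s_pos by blast
    then obtain z q where z: "z \<in> K" and q: "strict_mono q"
      and lim: "((\<lambda>n. g (s (r n))) \<circ> q) \<longlonglongrightarrow> z"
      by (rule seq_compactE[OF compact_imp_seq_compact[OF K]])
    have "(s \<circ> (r \<circ> q)) \<longlonglongrightarrow> 0"
      using s_lim r q by (intro LIMSEQ_subseq_LIMSEQ strict_mono_o)
    then have "z \<in> Z"
      using z lim s_pos by (intro limits[of "s \<circ> (r \<circ> q)"]) (auto simp: comp_def)
    have "\<forall>\<^sub>F n in sequentially. dist (g (s (r (q n)))) z < e"
      using lim \<open>0 < e\<close> unfolding comp_def by (rule tendstoD)
    then obtain n where "dist (g (s (r (q n)))) z < e"
      unfolding eventually_sequentially by blast
    then show False
      using far[of "q n"] infdist_le[OF \<open>z \<in> Z\<close>, of "g (s (r (q n)))"] by linarith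
  qed
qed simp

lemma box_set_eq_cbox: "box_set R = cbox (\<chi> i. - R) (\<chi> i. R :: real^'d)"
  unfolding box_set_def by (auto simp: mem_box_cart abs_le_iff minus_le_iff)

lemma compact_box_set: "compact (box_set R :: (real^'d) set)"
  by (simp add: box_set_eq_cbox)

lemma abs_nth_le_vec_linf: "\<bar>v$i\<bar> \<le> vec_linf v"
  unfolding vec_linf_def by (rule Max_ge) auto

lemma vec_linf_nonneg: "0 \<le> vec_linf v"
  using abs_nth_le_vec_linf[of v] abs_ge_zero order_trans by blast

lemma vec_linf_le_norm: "vec_linf v \<le> norm v"
  unfolding vec_linf_def by (rule Max.boundedI) (auto simp: component_le_norm_cart)

lemma bdd_below_vec_linf_dists: "bdd_below ((\<lambda>b. vec_linf (a - b)) ` B)"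
  by (rule bdd_belowI[of _ 0]) (auto simp: vec_linf_nonneg)

lemma d_inf_nonneg: "B \<noteq> {} \<Longrightarrow> 0 \<le> d_inf a B"
  unfolding d_inf_def by (rule cInf_greatest) (auto simp: vec_linf_nonneg)

lemma d_inf_antimono: "A \<noteq> {} \<Longrightarrow> A \<subseteq> B \<Longrightarrow> d_inf a B \<le> d_inf a A"
  unfolding d_inf_def by (rule cInf_superset_mono) (auto simp: bdd_below_vec_linf_dists)

lemma d_inf_le_vec_linf: "b \<in> B \<Longrightarrow> d_inf a B \<le> vec_linf (a - b)"
  unfolding d_inf_def by (rule cInf_lower) (auto simp: bdd_below_vec_linf_dists)

lemma d_inf_le_infdist: "B \<noteq> {} \<Longrightarrow> d_inf a B \<le> infdist a B"
  unfolding infdist_def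
  by (auto intro!: cINF_greatest order_trans[OF d_inf_le_vec_linf vec_linf_le_norm]
      simp: dist_norm)

lemma tendsto_d_inf_superset:
  assumes "A \<noteq> {}" "A \<subseteq> B" "((\<lambda>t. infdist (f t) A) \<longlongrightarrow> 0) F"
  shows "((\<lambda>t. d_inf (f t) B) \<longlongrightarrow> 0) F"
proof (rule tendsto_sandwich[OF _ _ tendsto_const assms(3)])
  have "B \<noteq> {}"
    using assms(1,2) by blast
  then show "\<forall>\<^sub>F t in F. 0 \<le> d_inf (f t) B"
    by (simp add: d_inf_nonneg)
  show "\<forall>\<^sub>F t in F. d_inf (f t) B \<le> infdist (f t) A"
    using assms(1,2) by (simp add: order_trans[OF d_inf_antimono d_inf_le_infdist])
qed

lemma fit_eq_sum:
  "fit x G z M = (\<Sum>i\<in>UNIV. \<Sum>j\<in>UNIV. (1 - M$i$j)^2 * ((x - G z)$i$j)^2)"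
  unfolding fit_def mat_l2sq_def hadamard_def ones_mat_def
  by (simp add: power_mult_distrib[symmetric] right_diff_distrib)

lemma fit_nonneg: "0 \<le> fit x G z M"
  unfolding fit_eq_sum by (intro sum_nonneg) auto

lemma support_mask_exists:
  fixes x :: "real^'n^'m" and G :: "real^'d \<Rightarrow> real^'n^'m"
  obtains M where "fit x G z M = 0" "mat_l1 M = real (mat_l0 (x - G z))"
    "mat_l0 M = mat_l0 (x - G z)"
proof
  define S where "S = {(i, j). (x - G z)$i$j \<noteq> 0}"
  define M :: "real^'n^'m" where "M = (\<chi> i j. if (i, j) \<in> S then 1 else 0)"
  show "fit x G z M = 0"
    unfolding fit_eq_sum M_def S_def by (auto intro!: sum.neutral)
  have "mat_l1 M = (\<Sum>p\<in>UNIV. if p \<in> S then 1 else 0)"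
    unfolding mat_l1_def M_def by (simp add: sum.cartesian_product case_prod_beta if_distrib)
  also have "\<dots> = real (card S)"
    by (simp add: sum.If_cases)
  finally show "mat_l1 M = real (mat_l0 (x - G z))"
    unfolding mat_l0_def S_def .
  have "{(i, j). M$i$j \<noteq> 0} = S"
    by (auto simp: M_def)
  then show "mat_l0 M = mat_l0 (x - G z)"
    unfolding mat_l0_def S_def by simp
qed

lemma penalized_objective_eq_sum:
  "fit x G z M + lam * mat_l1 M =
    (\<Sum>(i, j)\<in>UNIV. (1 - M$i$j)^2 * ((x - G z)$i$j)^2 + lam * \<bar>M$i$j\<bar>)"
  unfolding fit_eq_sum mat_l1_def
  by (simp add: sum_distrib_left sum.distrib sum.cartesian_product case_prod_beta)

lemma penalized_entry_ge:
  fixes m r lam c :: real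
  assumes "0 < c" "c \<le> r^2" "0 \<le> lam"
  shows "lam - lam^2 / (4 * c) \<le> (1 - m)^2 * r^2 + lam * \<bar>m\<bar>"
proof (cases "m \<le> 1")
  case True
  \<comment> \<open>Completing the square: over m, (1-m)^2 c + lam m is minimal at 1 - m = lam/(2c).\<close>
  have "lam - lam^2 / (4 * c) = (1 - m)^2 * c + lam * m - (2 * c * (1 - m) - lam)^2 / (4 * c)"
    using assms by (simp add: field_simps power2_eq_square)
  also have "\<dots> \<le> (1 - m)^2 * c + lam * m"
    using assms by simp
  also have "\<dots> \<le> (1 - m)^2 * r^2 + lam * \<bar>m\<bar>"
    using assms by (intro add_mono mult_left_mono) auto
  finally show ?thesis .
next
  case False
  then have "lam \<le> lam * \<bar>m\<bar>"
    using assms by (simp add: mult_le_cancel_left1)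
  moreover have "0 \<le> lam^2 / (4 * c)" "0 \<le> (1 - m)^2 * r^2"
    using assms by simp_all
  ultimately show ?thesis
    by linarith
qed

lemma penalized_objective_ge_card:
  fixes x :: "real^'n^'m" and N :: "('m \<times> 'n) set"
  assumes "0 < c" "0 \<le> lam" "\<And>i j. (i, j) \<in> N \<Longrightarrow> c \<le> ((x - G z)$i$j)^2"
  shows "real (card N) * (lam - lam^2 / (4 * c)) \<le> fit x G z M + lam * mat_l1 M"
proof -
  have "real (card N) * (lam - lam^2 / (4 * c))
      = (\<Sum>(i, j)\<in>N. lam - lam^2 / (4 * c))"
    by simp
  also have "\<dots> \<le> (\<Sum>(i, j)\<in>N. (1 - M$i$j)^2 * ((x - G z)$i$j)^2 + lam * \<bar>M$i$j\<bar>)"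
    using assms by (intro sum_mono) (auto intro: penalized_entry_ge)
  also have "\<dots> \<le> (\<Sum>(i, j)\<in>UNIV. (1 - M$i$j)^2 * ((x - G z)$i$j)^2 + lam * \<bar>M$i$j\<bar>)"
    using assms by (intro sum_mono2) auto
  finally show ?thesis
    unfolding penalized_objective_eq_sum .
qed

lemma penalized_objective_gt_near:
  fixes x :: "real^'n^'m" and G :: "real^'d \<Rightarrow> real^'n^'m"
  assumes G: "isCont G y" and n: "n < mat_l0 (x - G y)"
  obtains \<delta> where "0 < \<delta>"
    "\<forall>\<^sub>F z in nhds y. \<forall>lam M. 0 < lam \<longrightarrow> lam < \<delta> \<longrightarrow>
       lam * real n < fit x G z M + lam * mat_l1 M"
proof
  define N where "N = {(i, j). (x - G y)$i$j \<noteq> 0}"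
  define c where "c = Min ((\<lambda>(i, j). ((x - G y)$i$j)^2 / 2) ` N)"
  have card_N: "n + 1 \<le> card N"
    using n unfolding N_def mat_l0_def by simp
  then have "N \<noteq> {}"
    by auto
  then have c_pos: "0 < c"
    unfolding c_def N_def by auto
  have c_less: "c < ((x - G y)$i$j)^2" if "(i, j) \<in> N" for i j
  proof -
    have "c \<le> ((x - G y)$i$j)^2 / 2"
      unfolding c_def using that by (intro Min_le) auto
    moreover have "0 < ((x - G y)$i$j)^2"
      using that by (auto simp: N_def)
    ultimately show ?thesis
      by linarith
  qed
  \<comment> \<open>The n + 1 or more entries in N each cost at least lam - lam^2/(4c);
     this beats lam n as soon as (n + 1) lam < 4c.\<close>
  show "0 < 4 * c / (real n + 1)"
    using c_pos by simp
  have "(G \<longlongrightarrow> G y) (nhds y)"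
    using G by (simp add: isCont_def tendsto_at_iff_tendsto_nhds)
  then have "((\<lambda>z. ((x - G z)$i$j)^2) \<longlongrightarrow> ((x - G y)$i$j)^2) (nhds y)" for i j
    by (intro tendsto_intros)
  then have "\<forall>\<^sub>F z in nhds y. \<forall>(i, j)\<in>N. c < ((x - G z)$i$j)^2"
    using c_less by (auto intro!: eventually_ball_finite order_tendstoD)
  then show "\<forall>\<^sub>F z in nhds y. \<forall>lam M. 0 < lam \<longrightarrow> lam < 4 * c / (real n + 1) \<longrightarrow>
      lam * real n < fit x G z M + lam * mat_l1 M"
  proof (rule eventually_mono, intro allI impI)
    fix z lam and M :: "real^'n^'m"
    assume far: "\<forall>(i, j)\<in>N. c < ((x - G z)$i$j)^2"
      and lam: "0 < lam" and "lam < 4 * c / (real n + 1)"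
    then have small: "lam * (real n + 1) < 4 * c"
      by (simp add: field_simps)
    moreover have "0 \<le> lam * real n"
      using lam by simp
    ultimately have "lam < 4 * c"
      by (simp add: distrib_left)
    then have gain: "0 < lam - lam^2 / (4 * c)"
      using lam c_pos by (simp add: field_simps power2_eq_square)
    have "lam * (lam * (real n + 1)) < lam * (4 * c)"
      using small lam by (rule mult_strict_left_mono)
    then have "lam * real n < (real n + 1) * (lam - lam^2 / (4 * c))"
      using c_pos by (simp add: field_simps power2_eq_square)
    also have "\<dots> \<le> real (card N) * (lam - lam^2 / (4 * c))"
      using card_N gain by (intro mult_right_mono) auto
    also have "\<dots> \<le> fit x G z M + lam * mat_l1 M"
      using far lam c_pos by (intro penalized_objective_ge_card) auto
    finally show "lam * real n < fit x G z M + lam * mat_l1 M" .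
  qed
qed

definition l0_minimizers :: "real \<Rightarrow> real^'n^'m \<Rightarrow> (real^'d \<Rightarrow> real^'n^'m) \<Rightarrow> (real^'d) set" where
  "l0_minimizers R x G =
    {z \<in> box_set R. mat_l0 (x - G z) = Min ((\<lambda>z. mat_l0 (x - G z)) ` box_set R)}"

lemma finite_mat_l0_image: "finite ((\<lambda>z. mat_l0 (f z :: real^'n^'m)) ` S)"
  unfolding mat_l0_def by (rule finite_subset[of _ "card ` Pow UNIV"]) auto

lemma l0_minimizers_iff:
  "z \<in> l0_minimizers R x G \<longleftrightarrow>
    z \<in> box_set R \<and> (\<forall>z'\<in>box_set R. mat_l0 (x - G z) \<le> mat_l0 (x - G z'))"
  unfolding l0_minimizers_def using finite_mat_l0_image[of "\<lambda>z. x - G z" "box_set R"]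
  by (auto intro!: antisym Min_le Min.boundedI)

lemma l0_minimizers_nonempty:
  fixes G :: "real^'d \<Rightarrow> real^'n^'m"
  assumes "(box_set R :: (real^'d) set) \<noteq> {}"
  shows "l0_minimizers R x G \<noteq> {}"
proof -
  have "Min ((\<lambda>z. mat_l0 (x - G z)) ` box_set R) \<in> (\<lambda>z. mat_l0 (x - G z)) ` box_set R"
    by (rule Min_in[OF finite_mat_l0_image]) (use assms in simp)
  then show ?thesis
    unfolding l0_minimizers_def by (force simp: image_iff)
qed

lemma l0_minimizers_subset_opt_P0:
  assumes "zstar \<in> box_set R" "mat_l0 (x - G zstar) \<le> n0"
  shows "l0_minimizers R x G \<subseteq> {z. \<exists>M. opt_P0 R n0 x G z M}"
proof
  fix z assume z: "z \<in> l0_minimizers R x G"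
  obtain M where "fit x G z M = 0" "mat_l0 M = mat_l0 (x - G z)"
    by (rule support_mask_exists)
  moreover have "mat_l0 (x - G z) \<le> n0"
    using z assms l0_minimizers_iff order_trans by blast
  ultimately have "opt_P0 R n0 x G z M"
    using z unfolding opt_P0_def l0_minimizers_iff by (simp add: fit_nonneg)
  then show "z \<in> {z. \<exists>M. opt_P0 R n0 x G z M}"
    by blast
qed

lemma opt_Plam_le_l0:
  assumes "opt_Plam R lam x G z M" "z' \<in> box_set R"
  shows "fit x G z M + lam * mat_l1 M \<le> lam * real (mat_l0 (x - G z'))"
proof -
  obtain M' where "fit x G z' M' = 0" "mat_l1 M' = real (mat_l0 (x - G z'))"
    by (rule support_mask_exists)
  moreover have "fit x G z M + lam * mat_l1 M \<le> fit x G z' M' + lam * mat_l1 M'"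
    using assms unfolding opt_Plam_def by blast
  ultimately show ?thesis
    by simp
qed

lemma limit_of_opt_Plam_in_l0_minimizers:
  fixes G :: "real^'d \<Rightarrow> real^'n^'m"
  assumes G: "continuous_on UNIV G"
    and opt: "\<And>lam. 0 < lam \<Longrightarrow> \<exists>M. opt_Plam R lam x G (zhat lam) M"
    and s: "\<And>k. 0 < s k" "s \<longlonglongrightarrow> 0"
    and z: "z \<in> box_set R" "(\<lambda>k. zhat (s k)) \<longlonglongrightarrow> z"
  shows "z \<in> l0_minimizers R x G"
proof -
  obtain zmin where zmin: "zmin \<in> l0_minimizers R x G"
    using l0_minimizers_nonempty z(1) by blast
  define n where "n = mat_l0 (x - G zmin)"
  have "mat_l0 (x - G z) \<le> n"
  proof (rule ccontr)
    assume "\<not> mat_l0 (x - G z) \<le> n"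
    have "isCont G z"
      using G by (simp add: continuous_on_eq_continuous_at)
    moreover have "n < mat_l0 (x - G z)"
      using \<open>\<not> mat_l0 (x - G z) \<le> n\<close> by simp
    ultimately obtain \<delta> where "0 < \<delta>" and near: "\<forall>\<^sub>F z' in nhds z.
        \<forall>lam M. 0 < lam \<longrightarrow> lam < \<delta> \<longrightarrow> lam * real n < fit x G z' M + lam * mat_l1 M"
      by (rule penalized_objective_gt_near)
    have "\<forall>\<^sub>F k in sequentially. \<forall>lam M. 0 < lam \<longrightarrow> lam < \<delta> \<longrightarrow>
        lam * real n < fit x G (zhat (s k)) M + lam * mat_l1 M"
      using z(2) near by (rule filterlim_iff[THEN iffD1, rule_format])
    moreover have "\<forall>\<^sub>F k in sequentially. s k < \<delta>"
      using s(2) \<open>0 < \<delta>\<close> by (rule order_tendstoD)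
    ultimately have "\<forall>\<^sub>F k in sequentially.
        \<forall>M. s k * real n < fit x G (zhat (s k)) M + s k * mat_l1 M"
      by eventually_elim (use s(1) in blast)
    then obtain k where "\<forall>M. s k * real n < fit x G (zhat (s k)) M + s k * mat_l1 M"
      using eventually_happens'[OF trivial_limit_sequentially] by blast
    moreover obtain M where "opt_Plam R (s k) x G (zhat (s k)) M"
      using opt s(1) by blast
    ultimately show False
      using opt_Plam_le_l0 zmin unfolding l0_minimizers_iff n_def by (meson not_le)
  qed
  with zmin z(1) show ?thesis
    unfolding l0_minimizers_iff n_def using order_trans by blast
qed

theorem theorem1:
  fixes R :: real and n0 :: nat and x :: "real^'n^'m"
    and G :: "real^'d \<Rightarrow> real^'n^'m" and zstar :: "real^'d"
    and zhat :: "real \<Rightarrow> real^'d"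
  assumes "R > 0" and "n0 > 0"
    and "continuous_on UNIV G"
    and "zstar \<in> box_set R" and "mat_l0 (x - G zstar) \<le> n0"
    and "\<And>lam. lam > 0 \<Longrightarrow> \<exists>M. opt_Plam R lam x G (zhat lam) M"
  shows "((\<lambda>lam. d_inf (zhat lam) {z. \<exists>M. opt_P0 R n0 x G z M}) \<longlongrightarrow> 0) (at_right 0)
     \<and> ((\<lambda>lam. d_inf (zhat lam)
            {z \<in> box_set R. mat_l0 (x - G z) = Min ((\<lambda>z. mat_l0 (x - G z)) ` box_set R)})
          \<longlongrightarrow> 0) (at_right 0)
     \<and> ({z \<in> box_set R. mat_l0 (x - G z) = Min ((\<lambda>z. mat_l0 (x - G z)) ` box_set R)} = {zstar}
          \<longrightarrow> (zhat \<longlongrightarrow> zstar) (at_right 0))"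
proof -
  let ?Z = "l0_minimizers R x G"
  have Z_ne: "?Z \<noteq> {}"
    using assms(4) by (intro l0_minimizers_nonempty) blast
  have Z_sub: "?Z \<subseteq> {z. \<exists>M. opt_P0 R n0 x G z M}"
    using assms(4,5) by (rule l0_minimizers_subset_opt_P0)
  have infdist_lim: "((\<lambda>lam. infdist (zhat lam) ?Z) \<longlongrightarrow> 0) (at_right 0)"
  proof (rule tendsto_infdist_at_right_0_compact[OF compact_box_set])
    show "zhat t \<in> box_set R" if "0 < t" for t
      using assms(6)[OF that] unfolding opt_Plam_def by blast
  qed (use limit_of_opt_Plam_in_l0_minimizers[OF assms(3,6)] in blast)
  have "(zhat \<longlongrightarrow> zstar) (at_right 0)" if "?Z = {zstar}"
  proof -
    have "((\<lambda>lam. dist (zhat lam) zstar) \<longlongrightarrow> 0) (at_right 0)"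
      using infdist_lim unfolding that infdist_singleton .
    then show ?thesis
      by (rule tendsto_dist_iff[THEN iffD2])
  qed
  then show ?thesis
    unfolding l0_minimizers_def[symmetric]
    using tendsto_d_inf_superset[OF Z_ne Z_sub infdist_lim]
      tendsto_d_inf_superset[OF Z_ne order_refl infdist_lim] by blast
qed

end
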